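(* For all positive integers $d$ and $k$ and every finite graph $G$ with $\alpha^{\ast}(G)\le d$ and $\mathsf{rw}(G)\le k$, we have $\alpha\text{-}\mathsf{tw}(G)\le 3dk$.
   Context: $\alpha^{\ast}(G)=\max_{v}\alpha(G[N[v]])$ (local independence number). $\alpha\text{-}\mathsf{tw}(G)$ is the minimum, over all tree-decompositions $(T,\beta)$ of $G$, of $\max_t\alpha(G[\beta(t)])$. For $X\subseteq V(G)$, the cutrank of $X$ is the $\mathbb{F}_2$-rank of the submatrix of the adjacency matrix with rows $X$ and columns $V(G)\setminus X$. A rank-decomposition of $G$ is a pair $(T,\delta)$ with $T$ a tree whose internal nodes have degree $3$ and $\delta$ a bijection from the leaves of $T$ to $V(G)$; each edge $e$ of $T$ splits the leaves into two sides, and its cutrank is the cutrank of the image under $\delta$ of one side. The width is the maximum cutrank of an edge of $T$, and the rankwidth $\mathsf{rw}(G)$ is the minimum width of a rank-decomposition. *)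

theory Defs
  imports Main
begin

definition graph :: "'a set \<Rightarrow> ('a \<Rightarrow> 'a \<Rightarrow> bool) \<Rightarrow> bool" where
  "graph V E \<longleftrightarrow> finite V \<and> (\<forall>u v. E u v \<longrightarrow> E v u) \<and> (\<forall>v. \<not> E v v)
     \<and> (\<forall>u v. E u v \<longrightarrow> u \<in> V \<and> v \<in> V)"

definition independent :: "('a \<Rightarrow> 'a \<Rightarrow> bool) \<Rightarrow> 'a set \<Rightarrow> bool" where
  "independent E S \<longleftrightarrow> (\<forall>u\<in>S. \<forall>v\<in>S. \<not> E u v)"

definition alpha :: "('a \<Rightarrow> 'a \<Rightarrow> bool) \<Rightarrow> 'a set \<Rightarrow> nat" where
  "alpha E X = Max {card S | S. S \<subseteq> X \<and> independent E S}"

definition closed_nbhd :: "('a \<Rightarrow> 'a \<Rightarrow> bool) \<Rightarrow> 'a \<Rightarrow> 'a set" where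
  "closed_nbhd E v = insert v {u. E v u}"

definition local_alpha :: "'a set \<Rightarrow> ('a \<Rightarrow> 'a \<Rightarrow> bool) \<Rightarrow> nat" where
  "local_alpha V E = Max (insert 0 {alpha E (closed_nbhd E v) | v. v \<in> V})"

text \<open>Finite trees with node set N (a finite nonempty set of naturals) and adjacency A:
  connected, and every edge is a bridge (acyclic).\<close>
definition is_tree :: "nat set \<Rightarrow> (nat \<Rightarrow> nat \<Rightarrow> bool) \<Rightarrow> bool" where
  "is_tree N A \<longleftrightarrow> finite N \<and> N \<noteq> {} \<and> (\<forall>x y. A x y \<longrightarrow> A y x) \<and> (\<forall>x. \<not> A x x)
     \<and> (\<forall>x y. A x y \<longrightarrow> x \<in> N \<and> y \<in> N)
     \<and> (\<forall>x\<in>N. \<forall>y\<in>N. A\<^sup>*\<^sup>* x y)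
     \<and> (\<forall>x y. A x y \<longrightarrow> \<not> (\<lambda>u v. A u v \<and> {u, v} \<noteq> {x, y})\<^sup>*\<^sup>* x y)"

definition tree_decomposition ::
  "'a set \<Rightarrow> ('a \<Rightarrow> 'a \<Rightarrow> bool) \<Rightarrow> nat set \<Rightarrow> (nat \<Rightarrow> nat \<Rightarrow> bool) \<Rightarrow> (nat \<Rightarrow> 'a set) \<Rightarrow> bool" where
  "tree_decomposition V E N A \<beta> \<longleftrightarrow> is_tree N A
     \<and> (\<forall>t\<in>N. \<beta> t \<subseteq> V)
     \<and> (\<forall>v\<in>V. \<exists>t\<in>N. v \<in> \<beta> t)
     \<and> (\<forall>u v. E u v \<longrightarrow> (\<exists>t\<in>N. u \<in> \<beta> t \<and> v \<in> \<beta> t))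
     \<and> (\<forall>v\<in>V. \<forall>s\<in>N. \<forall>t\<in>N. v \<in> \<beta> s \<longrightarrow> v \<in> \<beta> t \<longrightarrow>
           (\<lambda>x y. A x y \<and> v \<in> \<beta> x \<and> v \<in> \<beta> y)\<^sup>*\<^sup>* s t)"

definition alpha_width :: "('a \<Rightarrow> 'a \<Rightarrow> bool) \<Rightarrow> nat set \<Rightarrow> (nat \<Rightarrow> 'a set) \<Rightarrow> nat" where
  "alpha_width E N \<beta> = Max {alpha E (\<beta> t) | t. t \<in> N}"

definition alpha_tw :: "'a set \<Rightarrow> ('a \<Rightarrow> 'a \<Rightarrow> bool) \<Rightarrow> nat" where
  "alpha_tw V E = (LEAST w. \<exists>N A \<beta>. tree_decomposition V E N A \<beta> \<and> alpha_width E N \<beta> = w)"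

text \<open>Cutrank of X: the GF(2)-rank of the adjacency submatrix with rows X and columns V - X,
  i.e. the maximum number of GF(2)-linearly independent rows; a set S of rows is linearly
  independent over GF(2) iff no nonempty subset T of S sums to the zero vector, i.e. for
  every nonempty T some column y has an odd number of ones in the rows of T.\<close>
definition cutrank :: "'a set \<Rightarrow> ('a \<Rightarrow> 'a \<Rightarrow> bool) \<Rightarrow> 'a set \<Rightarrow> nat" where
  "cutrank V E X = Max {card S | S. S \<subseteq> X \<and>
      (\<forall>T. T \<subseteq> S \<longrightarrow> T \<noteq> {} \<longrightarrow> (\<exists>y \<in> V - X. odd (card {x \<in> T. E x y})))}"

definition tdegree :: "nat set \<Rightarrow> (nat \<Rightarrow> nat \<Rightarrow> bool) \<Rightarrow> nat \<Rightarrow> nat" where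
  "tdegree N A t = card {s \<in> N. A t s}"

definition leaves :: "nat set \<Rightarrow> (nat \<Rightarrow> nat \<Rightarrow> bool) \<Rightarrow> nat set" where
  "leaves N A = {t \<in> N. tdegree N A t \<le> 1}"

definition edge_side :: "(nat \<Rightarrow> nat \<Rightarrow> bool) \<Rightarrow> nat \<Rightarrow> nat \<Rightarrow> nat set" where
  "edge_side A s t = {u. (\<lambda>x y. A x y \<and> {x, y} \<noteq> {s, t})\<^sup>*\<^sup>* s u}"

definition rank_decomposition ::
  "'a set \<Rightarrow> nat set \<Rightarrow> (nat \<Rightarrow> nat \<Rightarrow> bool) \<Rightarrow> (nat \<Rightarrow> 'a) \<Rightarrow> bool" where
  "rank_decomposition V N A \<delta> \<longleftrightarrow> is_tree N A
     \<and> (\<forall>t\<in>N. tdegree N A t \<le> 1 \<or> tdegree N A t = 3)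
     \<and> bij_betw \<delta> (leaves N A) V"

definition rank_width_of ::
  "'a set \<Rightarrow> ('a \<Rightarrow> 'a \<Rightarrow> bool) \<Rightarrow> nat set \<Rightarrow> (nat \<Rightarrow> nat \<Rightarrow> bool) \<Rightarrow> (nat \<Rightarrow> 'a) \<Rightarrow> nat" where
  "rank_width_of V E N A \<delta> =
     Max (insert 0 {cutrank V E (\<delta> ` (leaves N A \<inter> edge_side A s t)) | s t. A s t})"

definition rankwidth :: "'a set \<Rightarrow> ('a \<Rightarrow> 'a \<Rightarrow> bool) \<Rightarrow> nat" where
  "rankwidth V E = (LEAST k. \<exists>N A \<delta>. rank_decomposition V N A \<delta> \<and> rank_width_of V E N A \<delta> = k)"

end

theory Submission
  imports Defs
begin

(*
  Fix a rank-decomposition (T, delta) of minimum width k. For a tree edge st let X_st be the set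
  of vertices sitting at the leaves on the s-side of st. The bag of a node t is the closed
  neighbourhood of delta t if t is a leaf, together with, for every neighbour s of t, the vertices
  outside X_st that have a neighbour in X_st.

  A maximal GF(2)-independent set of rows of the X_st-cut has at most k elements, and every other
  row is a sum of some of them; so at most k vertices of X_st dominate all vertices outside X_st
  with a neighbour in X_st. As t has degree 1 or 3, its bag is covered by at most 3k closed
  neighbourhoods and has independence number at most 3dk. A vertex v in the bag of t, for t not the
  leaf of v, also lies in the bag of the neighbour of t towards the leaf of v; hence the bags
  containing v form a subtree.
*)

section \<open>Trees\<close>

definition delete_edge :: "(nat \<Rightarrow> nat \<Rightarrow> bool) \<Rightarrow> nat \<Rightarrow> nat \<Rightarrow> nat \<Rightarrow> nat \<Rightarrow> bool" where
  "delete_edge A s t = (\<lambda>x y. A x y \<and> {x, y} \<noteq> {s, t})"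

lemma edge_side_delete_edge: "edge_side A s t = {u. (delete_edge A s t)\<^sup>*\<^sup>* s u}"
  by (simp add: edge_side_def delete_edge_def)

lemma delete_edge_commute: "delete_edge A s t = delete_edge A t s"
  by (simp add: delete_edge_def insert_commute)

lemma in_edge_side_self [simp]: "s \<in> edge_side A s t"
  by (simp add: edge_side_delete_edge)

lemma symp_delete_edge: "symp A \<Longrightarrow> symp (delete_edge A s t)"
  by (auto intro!: sympI simp: delete_edge_def insert_commute dest: sympD)

lemma is_treeI:
  assumes "finite N" "N \<noteq> {}" "symp A" "\<And>x. \<not> A x x" "\<And>x y. A x y \<Longrightarrow> x \<in> N \<and> y \<in> N"
    and "\<And>x y. x \<in> N \<Longrightarrow> y \<in> N \<Longrightarrow> A\<^sup>*\<^sup>* x y"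
    and "\<And>x y. A x y \<Longrightarrow> \<not> (delete_edge A x y)\<^sup>*\<^sup>* x y"
  shows "is_tree N A"
  using assms unfolding is_tree_def delete_edge_def by (blast dest: sympD)

context
  fixes N :: "nat set" and A :: "nat \<Rightarrow> nat \<Rightarrow> bool"
  assumes tree: "is_tree N A"
begin

lemma is_tree_sym: "A x y \<Longrightarrow> A y x"
  using tree unfolding is_tree_def by blast

lemma is_tree_irrefl: "\<not> A x x"
  using tree unfolding is_tree_def by blast

lemma is_tree_nodes: "A x y \<Longrightarrow> x \<in> N \<and> y \<in> N"
  using tree unfolding is_tree_def by blast

lemma is_tree_connected: "x \<in> N \<Longrightarrow> y \<in> N \<Longrightarrow> A\<^sup>*\<^sup>* x y"
  using tree unfolding is_tree_def by blast

lemma is_tree_bridge: "A s t \<Longrightarrow> \<not> (delete_edge A s t)\<^sup>*\<^sup>* s t"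
  using tree unfolding is_tree_def delete_edge_def by blast

lemma is_tree_symp: "symp A"
  by (blast intro: sympI is_tree_sym)

lemma not_in_edge_side: "A s t \<Longrightarrow> t \<notin> edge_side A s t"
  using is_tree_bridge by (simp add: edge_side_delete_edge)

lemma edge_sides_disjoint:
  assumes "A s t"
  shows "edge_side A s t \<inter> edge_side A t s = {}"
proof (rule ccontr)
  assume "edge_side A s t \<inter> edge_side A t s \<noteq> {}"
  then obtain z where "(delete_edge A s t)\<^sup>*\<^sup>* s z" and "(delete_edge A s t)\<^sup>*\<^sup>* t z"
    by (auto simp: edge_side_delete_edge delete_edge_commute[of A t s])
  then have "(delete_edge A s t)\<^sup>*\<^sup>* s t"
    using sympD[OF symp_rtranclp[OF symp_delete_edge[OF is_tree_symp]]] by (meson rtranclp_trans)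
  with is_tree_bridge assms show False by blast
qed

lemma edge_side_subset_nodes: "A s t \<Longrightarrow> edge_side A s t \<subseteq> N"
proof
  fix u assume "A s t" and "u \<in> edge_side A s t"
  then have "(delete_edge A s t)\<^sup>*\<^sup>* s u" by (simp add: edge_side_delete_edge)
  then show "u \<in> N"
    by induction (use \<open>A s t\<close> is_tree_nodes in \<open>auto simp: delete_edge_def\<close>)
qed

lemma edge_side_subset_edge_side:
  assumes "A t s" and "A t s'" and "s' \<noteq> s"
  shows "edge_side A s' t \<subseteq> edge_side A t s"
proof
  fix z assume "z \<in> edge_side A s' t"
  then have "(delete_edge A s' t)\<^sup>*\<^sup>* s' z" by (simp add: edge_side_delete_edge)
  then have "(delete_edge A t s)\<^sup>*\<^sup>* t z"
  proof induction
    case base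
    have "t \<noteq> s'" using assms(2) is_tree_irrefl by blast
    then have "delete_edge A t s t s'"
      using assms by (auto simp: delete_edge_def doubleton_eq_iff)
    then show ?case by simp
  next
    case (step a b)
    have "{a, b} \<noteq> {t, s}"
    proof
      assume "{a, b} = {t, s}"
      then have "(delete_edge A s' t)\<^sup>*\<^sup>* s' t"
        using step by (auto simp: doubleton_eq_iff intro: rtranclp.rtrancl_into_rtrancl)
      with is_tree_bridge is_tree_sym assms(2) show False by blast
    qed
    with step show ?case
      by (auto simp: delete_edge_def intro: rtranclp.rtrancl_into_rtrancl)
  qed
  then show "z \<in> edge_side A t s" by (simp add: edge_side_delete_edge)
qed

lemma edge_side_psubset_edge_side:
  assumes "A t s" and "A t s'" and "s' \<noteq> s"
  shows "edge_side A s' t \<subset> edge_side A t s"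
  using edge_side_subset_edge_side[OF assms] not_in_edge_side[OF is_tree_sym[OF assms(2)]]
  by auto

lemma exists_edge_side_containing:
  assumes "t \<in> N" and "x \<in> N" and "x \<noteq> t"
  shows "\<exists>s. A t s \<and> x \<in> edge_side A s t"
proof -
  have "A\<^sup>*\<^sup>* t x" using assms is_tree_connected by blast
  then have "x \<noteq> t \<longrightarrow> (\<exists>s. A t s \<and> (delete_edge A s t)\<^sup>*\<^sup>* s x)"
  proof induction
    case (step a b)
    show ?case
    proof
      assume "b \<noteq> t"
      show "\<exists>s. A t s \<and> (delete_edge A s t)\<^sup>*\<^sup>* s b"
      proof (cases "a = t")
        case True
        then show ?thesis using step.hyps(2) by auto
      next
        case False
        then obtain s where "A t s" "(delete_edge A s t)\<^sup>*\<^sup>* s a" using step.IH by blast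
        moreover have "delete_edge A s t a b"
          using step.hyps(2) False \<open>b \<noteq> t\<close> by (auto simp: delete_edge_def doubleton_eq_iff)
        ultimately show ?thesis by (meson rtranclp.rtrancl_into_rtrancl)
      qed
    qed
  qed simp
  then show ?thesis using assms(3) by (auto simp: edge_side_delete_edge)
qed

end

section \<open>Independence number\<close>

lemma independent_subset: "independent E S \<Longrightarrow> T \<subseteq> S \<Longrightarrow> independent E T"
  unfolding independent_def by blast

lemma finite_independent_cards: "finite X \<Longrightarrow> finite {card S | S. S \<subseteq> X \<and> independent E S}"
  by (rule finite_subset[of _ "card ` Pow X"]) auto

lemma card_le_alpha: "finite X \<Longrightarrow> S \<subseteq> X \<Longrightarrow> independent E S \<Longrightarrow> card S \<le> alpha E X"
  unfolding alpha_def by (intro Max_ge finite_independent_cards) auto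

lemma alpha_leI:
  assumes "finite X" and "\<And>S. S \<subseteq> X \<Longrightarrow> independent E S \<Longrightarrow> card S \<le> m"
  shows "alpha E X \<le> m"
proof -
  have "{} \<subseteq> X \<and> independent E {}" by (simp add: independent_def)
  then show ?thesis
    unfolding alpha_def using assms by (subst Max_le_iff[OF finite_independent_cards]) auto
qed

lemma alpha_mono: "finite Y \<Longrightarrow> X \<subseteq> Y \<Longrightarrow> alpha E X \<le> alpha E Y"
  by (rule alpha_leI) (auto intro: card_le_alpha finite_subset)

lemma alpha_le_card: "finite X \<Longrightarrow> alpha E X \<le> card X"
  by (rule alpha_leI) (auto intro: card_mono)

lemma closed_nbhd_subset: "graph V E \<Longrightarrow> v \<in> V \<Longrightarrow> closed_nbhd E v \<subseteq> V"
  unfolding graph_def closed_nbhd_def by auto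

lemma alpha_closed_nbhd_le_local_alpha:
  assumes "graph V E" and "v \<in> V"
  shows "alpha E (closed_nbhd E v) \<le> local_alpha V E"
proof -
  have "finite V" using assms(1) by (simp add: graph_def)
  then show ?thesis unfolding local_alpha_def using assms(2) by (intro Max_ge) auto
qed

lemma alpha_UN_closed_nbhd_le:
  assumes "graph V E" and "finite U" and "U \<subseteq> V"
  shows "alpha E (\<Union>u\<in>U. closed_nbhd E u) \<le> card U * local_alpha V E"
proof (rule alpha_leI)
  have "finite V" using assms(1) by (simp add: graph_def)
  then show "finite (\<Union>u\<in>U. closed_nbhd E u)"
    using assms closed_nbhd_subset by (meson UN_least finite_subset subsetD)
next
  fix S assume S: "S \<subseteq> (\<Union>u\<in>U. closed_nbhd E u)" "independent E S"
  have "card S = card (\<Union>u\<in>U. S \<inter> closed_nbhd E u)"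
    using S(1) by (intro arg_cong[where f = card]) blast
  also have "\<dots> \<le> (\<Sum>u\<in>U. card (S \<inter> closed_nbhd E u))"
    by (rule card_UN_le[OF assms(2)])
  also have "\<dots> \<le> (\<Sum>u\<in>U. local_alpha V E)"
  proof (rule sum_mono)
    fix u assume "u \<in> U"
    then have "u \<in> V" using assms(3) by blast
    have "finite (closed_nbhd E u)"
      using closed_nbhd_subset[OF assms(1) \<open>u \<in> V\<close>] assms(1) finite_subset
      by (auto simp: graph_def)
    then have "card (S \<inter> closed_nbhd E u) \<le> alpha E (closed_nbhd E u)"
      using S(2) by (auto intro: card_le_alpha independent_subset)
    also have "\<dots> \<le> local_alpha V E"
      using alpha_closed_nbhd_le_local_alpha[OF assms(1) \<open>u \<in> V\<close>] .
    finally show "card (S \<inter> closed_nbhd E u) \<le> local_alpha V E" .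
  qed
  finally show "card S \<le> card U * local_alpha V E" by simp
qed

section \<open>Cutrank\<close>

definition rows_independent :: "'a set \<Rightarrow> ('a \<Rightarrow> 'a \<Rightarrow> bool) \<Rightarrow> 'a set \<Rightarrow> 'a set \<Rightarrow> bool" where
  "rows_independent V E X S \<longleftrightarrow>
     (\<forall>T. T \<subseteq> S \<longrightarrow> T \<noteq> {} \<longrightarrow> (\<exists>y \<in> V - X. odd (card {x \<in> T. E x y})))"

lemma cutrank_rows_independent:
  "cutrank V E X = Max {card S | S. S \<subseteq> X \<and> rows_independent V E X S}"
  by (simp add: cutrank_def rows_independent_def)

lemma finite_rows_independent_cards:
  "finite X \<Longrightarrow> finite {card S | S. S \<subseteq> X \<and> rows_independent V E X S}"
  by (rule finite_subset[of _ "card ` Pow X"]) auto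

lemma cutrank_attained:
  assumes "finite X"
  shows "\<exists>S \<subseteq> X. rows_independent V E X S \<and> card S = cutrank V E X"
proof -
  let ?cards = "{card S | S. S \<subseteq> X \<and> rows_independent V E X S}"
  have "finite ?cards" using assms by (rule finite_rows_independent_cards)
  moreover have "{} \<subseteq> X \<and> rows_independent V E X {}"
    by (simp add: rows_independent_def)
  then have "?cards \<noteq> {}" by blast
  ultimately have "Max ?cards \<in> ?cards" by (rule Max_in)
  then show ?thesis unfolding cutrank_rows_independent by auto
qed

lemma card_le_cutrank:
  "finite X \<Longrightarrow> S \<subseteq> X \<Longrightarrow> rows_independent V E X S \<Longrightarrow> card S \<le> cutrank V E X"
  unfolding cutrank_rows_independent by (intro Max_ge finite_rows_independent_cards) auto

text \<open>If the row of y is a GF(2)-combination of rows of S, then each column in which y has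
  a one must also have a one in some row of S.\<close>
lemma rows_dependent_insert_adjacent:
  assumes indep: "rows_independent V E X S" and dep: "\<not> rows_independent V E X (insert y S)"
    and "finite S" and "v \<in> V - X" and "E y v"
  shows "\<exists>s\<in>S. E s v"
proof -
  obtain T where T: "T \<subseteq> insert y S" "T \<noteq> {}" and even: "\<forall>z \<in> V - X. even (card {x \<in> T. E x z})"
    using dep unfolding rows_independent_def by blast
  have "y \<in> T"
  proof (rule ccontr)
    assume "y \<notin> T"
    then have "T \<subseteq> S" using T(1) by blast
    then obtain z where "z \<in> V - X" "odd (card {x \<in> T. E x z})"
      using indep T(2) unfolding rows_independent_def by blast
    with even show False by blast
  qed
  have "finite T" using T(1) \<open>finite S\<close> finite_subset by blast
  have "{x \<in> T. E x v} = insert y {x \<in> T - {y}. E x v}"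
    using \<open>y \<in> T\<close> \<open>E y v\<close> by auto
  then have "card {x \<in> T. E x v} = Suc (card {x \<in> T - {y}. E x v})"
    using \<open>finite T\<close> by simp
  moreover have "even (card {x \<in> T. E x v})" using even \<open>v \<in> V - X\<close> by blast
  ultimately have "odd (card {x \<in> T - {y}. E x v})" by simp
  then have "card {x \<in> T - {y}. E x v} \<noteq> 0" by (metis even_zero)
  then obtain x where "x \<in> T - {y}" "E x v" by (metis (no_types, lifting) Collect_empty_eq card.empty)
  then show ?thesis using T(1) by blast
qed

lemma cutrank_dominating_set:
  assumes "finite X"
  shows "\<exists>S \<subseteq> X. card S \<le> cutrank V E X \<and>
           (\<forall>v \<in> V - X. (\<exists>y \<in> X. E y v) \<longrightarrow> (\<exists>s \<in> S. E s v))"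
proof -
  obtain S where S: "S \<subseteq> X" "rows_independent V E X S" "card S = cutrank V E X"
    using cutrank_attained[OF assms] by blast
  have "finite S" using S(1) assms finite_subset by blast
  have "\<exists>s \<in> S. E s v" if v: "v \<in> V - X" and adjacent: "\<exists>y \<in> X. E y v" for v
  proof -
    obtain y where "y \<in> X" "E y v" using adjacent by blast
    show ?thesis
    proof (cases "y \<in> S")
      case False
      have "\<not> rows_independent V E X (insert y S)"
      proof
        assume "rows_independent V E X (insert y S)"
        moreover have "insert y S \<subseteq> X" using S(1) \<open>y \<in> X\<close> by blast
        ultimately have "card (insert y S) \<le> cutrank V E X"
          using card_le_cutrank[OF assms] by blast
        with False \<open>finite S\<close> S(3) show False by simp
      qed
      then show ?thesis
        using rows_dependent_insert_adjacent[OF S(2) _ \<open>finite S\<close> v \<open>E y v\<close>] by blast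
    qed (use \<open>E y v\<close> in blast)
  qed
  then show ?thesis using S(1,3) by (intro exI[of _ S]) simp
qed

section \<open>Existence of rank-decompositions\<close>

definition parent_adj :: "nat set \<Rightarrow> (nat \<Rightarrow> nat) \<Rightarrow> nat \<Rightarrow> nat \<Rightarrow> bool" where
  "parent_adj N p x y \<longleftrightarrow> x \<in> N \<and> y \<in> N \<and> (x \<noteq> 0 \<and> y = p x \<or> y \<noteq> 0 \<and> x = p y)"

lemma symp_parent_adj: "symp (parent_adj N p)"
  by (auto intro!: sympI simp: parent_adj_def)

context
  fixes N :: "nat set" and p :: "nat \<Rightarrow> nat"
  assumes parent_in: "\<And>x. x \<in> N \<Longrightarrow> p x \<in> N"
    and parent_le: "\<And>x. p x \<le> x"
    and parent_less: "\<And>x. x \<noteq> 0 \<Longrightarrow> p x < x"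
begin

lemma funpow_parent_le: "(p ^^ j) z \<le> z"
  by (induction j) (auto intro: le_trans parent_le)

lemma parent_adj_to_root: "x \<in> N \<Longrightarrow> (parent_adj N p)\<^sup>*\<^sup>* x 0"
proof (induction x rule: less_induct)
  case (less x)
  show ?case
  proof (cases "x = 0")
    case False
    then have "parent_adj N p x (p x)" using less.prems parent_in by (simp add: parent_adj_def)
    moreover have "(parent_adj N p)\<^sup>*\<^sup>* (p x) 0"
      using less.IH parent_less parent_in False less.prems by blast
    ultimately show ?thesis by (rule converse_rtranclp_into_rtranclp)
  qed simp
qed

lemma delete_parent_edge_reaches_descendants:
  "(delete_edge (parent_adj N p) c (p c))\<^sup>*\<^sup>* c z \<Longrightarrow> \<exists>j. (p ^^ j) z = c"
proof (induction rule: rtranclp_induct)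
  case base
  show ?case by (rule exI[of _ 0]) simp
next
  case (step a b)
  then obtain j where j: "(p ^^ j) a = c" by blast
  from step.hyps(2) have ab: "parent_adj N p a b" and ne: "{a, b} \<noteq> {c, p c}"
    by (auto simp: delete_edge_def)
  show ?case
  proof (cases "b \<noteq> 0 \<and> a = p b")
    case True
    have "(p ^^ Suc j) b = (p ^^ j) (p b)" by (simp only: funpow_Suc_right comp_apply)
    then have "(p ^^ Suc j) b = c" using j True by simp
    then show ?thesis by blast
  next
    case False
    then have "b = p a" using ab by (auto simp: parent_adj_def)
    show ?thesis
    proof (cases j)
      case 0
      then show ?thesis using j ne \<open>b = p a\<close> by auto
    next
      case (Suc i)
      have "(p ^^ j) a = (p ^^ i) b"
        using Suc \<open>b = p a\<close> by (simp only: funpow_Suc_right comp_apply)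
      then have "(p ^^ i) b = c" using j by simp
      then show ?thesis by blast
    qed
  qed
qed

lemma parent_edge_bridge:
  assumes "c \<noteq> 0"
  shows "\<not> (delete_edge (parent_adj N p) c (p c))\<^sup>*\<^sup>* c (p c)"
proof
  assume "(delete_edge (parent_adj N p) c (p c))\<^sup>*\<^sup>* c (p c)"
  then obtain j where "(p ^^ j) (p c) = c" using delete_parent_edge_reaches_descendants by blast
  moreover have "(p ^^ j) (p c) \<le> p c" by (rule funpow_parent_le)
  ultimately show False using parent_less[OF assms] by linarith
qed

lemma is_tree_parent_adj:
  assumes "finite N" and "0 \<in> N"
  shows "is_tree N (parent_adj N p)"
proof (rule is_treeI)
  show "symp (parent_adj N p)" by (rule symp_parent_adj)
  show "\<not> parent_adj N p x x" for x
    using parent_less by (metis less_irrefl parent_adj_def)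
  show "(parent_adj N p)\<^sup>*\<^sup>* x y" if "x \<in> N" "y \<in> N" for x y
    using parent_adj_to_root[OF that(1)]
      sympD[OF symp_rtranclp[OF symp_parent_adj] parent_adj_to_root[OF that(2)]]
    by (rule rtranclp_trans)
  show "\<not> (delete_edge (parent_adj N p) x y)\<^sup>*\<^sup>* x y" if "parent_adj N p x y" for x y
  proof (cases "x \<noteq> 0 \<and> y = p x")
    case True
    then show ?thesis using parent_edge_bridge by blast
  next
    case False
    then have "y \<noteq> 0" and "x = p y" using that by (auto simp: parent_adj_def)
    then show ?thesis
      using parent_edge_bridge[of y] delete_edge_commute[of "parent_adj N p" x y]
        sympD[OF symp_rtranclp[OF symp_delete_edge[OF symp_parent_adj]]] by metis
  qed
qed (use assms in \<open>auto simp: parent_adj_def\<close>)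

end

text \<open>The caterpillar with spine 1, ..., m, where each spine node x carries the leaf x + m and
  the two ends of the spine carry the extra leaves 0 and 2m + 1: a tree with m + 2 leaves
  whose other nodes have degree 3.\<close>
definition caterpillar_parent :: "nat \<Rightarrow> nat \<Rightarrow> nat" where
  "caterpillar_parent m x = (if x \<le> m then x - 1 else if x \<le> 2 * m then x - m else m)"

abbreviation caterpillar :: "nat \<Rightarrow> nat \<Rightarrow> nat \<Rightarrow> bool" where
  "caterpillar m \<equiv> parent_adj {..2 * m + 1} (caterpillar_parent m)"

lemma is_tree_caterpillar: "is_tree {..2 * m + 1} (caterpillar m)"
  by (rule is_tree_parent_adj) (auto simp: caterpillar_parent_def)

lemma caterpillar_neighbours_0: "{s \<in> {..2 * m + 1}. caterpillar m 0 s} = {1}"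
  by (auto simp: parent_adj_def caterpillar_parent_def split: if_splits)

lemma caterpillar_neighbours_spine:
  "1 \<le> x \<Longrightarrow> x \<le> m \<Longrightarrow>
    {s \<in> {..2 * m + 1}. caterpillar m x s} = {x - 1, x + m, if x < m then x + 1 else 2 * m + 1}"
  by (auto simp: parent_adj_def caterpillar_parent_def split: if_splits)

lemma caterpillar_neighbours_leaf:
  "m < x \<Longrightarrow> x \<le> 2 * m + 1 \<Longrightarrow> {s \<in> {..2 * m + 1}. caterpillar m x s} = {caterpillar_parent m x}"
  by (auto simp: parent_adj_def caterpillar_parent_def split: if_splits)

lemma caterpillar_tdegree:
  assumes "t \<in> {..2 * m + 1}"
  shows "tdegree {..2 * m + 1} (caterpillar m) t = (if 1 \<le> t \<and> t \<le> m then 3 else 1)"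
proof -
  consider "t = 0" | "1 \<le> t \<and> t \<le> m" | "m < t \<and> t \<le> 2 * m + 1" using assms by force
  then show ?thesis
  proof cases
    case 1
    then show ?thesis using caterpillar_neighbours_0[of m] by (simp add: tdegree_def)
  next
    case 2
    then have "card {t - 1, t + m, if t < m then t + 1 else 2 * m + 1} = 3"
      by (cases "t < m") (auto simp: card_insert_if)
    then show ?thesis using 2 caterpillar_neighbours_spine[of t m] by (simp add: tdegree_def)
  next
    case 3
    then show ?thesis using caterpillar_neighbours_leaf[of m t] by (simp add: tdegree_def)
  qed
qed

lemma caterpillar_leaves: "leaves {..2 * m + 1} (caterpillar m) = insert 0 {m<..2 * m + 1}"
proof (rule set_eqI)
  fix t
  show "t \<in> leaves {..2 * m + 1} (caterpillar m) \<longleftrightarrow> t \<in> insert 0 {m<..2 * m + 1}"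
  proof (cases "t \<in> {..2 * m + 1}")
    case True
    then show ?thesis using caterpillar_tdegree[OF True] by (auto simp: leaves_def)
  qed (auto simp: leaves_def)
qed

lemma rank_decomposition_exists:
  assumes "finite V" and "2 \<le> card V"
  shows "\<exists>N A \<delta>. rank_decomposition V N A \<delta>"
proof -
  define m where "m = card V - 2"
  have "card (insert 0 {m<..2 * m + 1}) = card V" using assms(2) by (simp add: m_def)
  then obtain \<delta> where \<delta>: "bij_betw \<delta> (insert 0 {m<..2 * m + 1}) V"
    using finite_same_card_bij[of "insert 0 {m<..2 * m + 1}" V] assms(1) by auto
  have "rank_decomposition V {..2 * m + 1} (caterpillar m) \<delta>"
    unfolding rank_decomposition_def caterpillar_leaves
  proof (intro conjI ballI is_tree_caterpillar)
    fix t assume "t \<in> {..2 * m + 1}"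
    then show "tdegree {..2 * m + 1} (caterpillar m) t \<le> 1 \<or> tdegree {..2 * m + 1} (caterpillar m) t = 3"
      using caterpillar_tdegree[of t m] by simp
  qed (rule \<delta>)
  then show ?thesis by blast
qed

lemma optimal_rank_decomposition_exists:
  assumes "finite V" and "2 \<le> card V"
  shows "\<exists>N A \<delta>. rank_decomposition V N A \<delta> \<and> rank_width_of V E N A \<delta> = rankwidth V E"
  unfolding rankwidth_def
  by (rule LeastI_ex) (use rank_decomposition_exists[OF assms] in blast)

lemma alpha_tw_le_alpha_width:
  "tree_decomposition V E N A \<beta> \<Longrightarrow> alpha_tw V E \<le> alpha_width E N \<beta>"
  unfolding alpha_tw_def by (rule Least_le) blast

lemma alpha_width_le:
  assumes "finite N" and "N \<noteq> {}" and "\<And>t. t \<in> N \<Longrightarrow> alpha E (\<beta> t) \<le> w"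
  shows "alpha_width E N \<beta> \<le> w"
  unfolding alpha_width_def using assms by (subst Max_le_iff) auto

lemma tree_decomposition_single_bag:
  assumes "graph V E"
  shows "tree_decomposition V E {0} (\<lambda>_ _. False) (\<lambda>_. V)"
proof -
  have "is_tree {0} (\<lambda>_ _. False)" unfolding is_tree_def by auto
  then show ?thesis using assms unfolding tree_decomposition_def graph_def by auto
qed

lemma alpha_tw_le_alpha: "graph V E \<Longrightarrow> alpha_tw V E \<le> alpha E V"
  using alpha_tw_le_alpha_width[OF tree_decomposition_single_bag] by (simp add: alpha_width_def)

lemma cutrank_le_rank_width_of:
  assumes "rank_decomposition V N A \<delta>" and "A s t"
  shows "cutrank V E (\<delta> ` (leaves N A \<inter> edge_side A s t)) \<le> rank_width_of V E N A \<delta>"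
proof -
  have tree: "is_tree N A" using assms(1) by (simp add: rank_decomposition_def)
  let ?cutranks = "{cutrank V E (\<delta> ` (leaves N A \<inter> edge_side A s t)) | s t. A s t}"
  have "?cutranks \<subseteq> (\<lambda>(s, t). cutrank V E (\<delta> ` (leaves N A \<inter> edge_side A s t))) ` (N \<times> N)"
    using is_tree_nodes[OF tree] by fastforce
  moreover have "finite N" using tree by (simp add: is_tree_def)
  ultimately have "finite ?cutranks" by (meson finite_SigmaI finite_imageI finite_subset)
  then show ?thesis unfolding rank_width_of_def using assms(2) by (intro Max_ge) auto
qed

section \<open>The tree-decomposition induced by a rank-decomposition\<close>

locale graph_rank_decomposition =
  fixes V :: "'a set" and E :: "'a \<Rightarrow> 'a \<Rightarrow> bool"
    and N :: "nat set" and A :: "nat \<Rightarrow> nat \<Rightarrow> bool" and \<delta> :: "nat \<Rightarrow> 'a"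
  assumes graph: "graph V E" and rank_decomposition: "rank_decomposition V N A \<delta>"
begin

definition leaf_vertices :: "nat \<Rightarrow> nat \<Rightarrow> 'a set" where
  "leaf_vertices s t = \<delta> ` (leaves N A \<inter> edge_side A s t)"

definition side_boundary :: "nat \<Rightarrow> nat \<Rightarrow> 'a set" where
  "side_boundary s t = {v. v \<notin> leaf_vertices s t \<and> (\<exists>w \<in> leaf_vertices s t. E w v)}"

definition bag :: "nat \<Rightarrow> 'a set" where
  "bag t = (if t \<in> leaves N A then closed_nbhd E (\<delta> t) else {})
     \<union> (\<Union>s \<in> {s. A t s}. side_boundary s t)"

definition leaf_of :: "'a \<Rightarrow> nat" where
  "leaf_of = inv_into (leaves N A) \<delta>"

definition bag_adj :: "'a \<Rightarrow> nat \<Rightarrow> nat \<Rightarrow> bool" where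
  "bag_adj v x y \<longleftrightarrow> A x y \<and> v \<in> bag x \<and> v \<in> bag y"

lemma tree: "is_tree N A"
  using rank_decomposition by (simp add: rank_decomposition_def)

lemma finite_nodes: "finite N"
  using tree by (simp add: is_tree_def)

lemma finite_vertices: "finite V"
  using graph by (simp add: graph_def)

lemma bij_leaves: "bij_betw \<delta> (leaves N A) V"
  using rank_decomposition by (simp add: rank_decomposition_def)

lemma leaf_of: "v \<in> V \<Longrightarrow> leaf_of v \<in> leaves N A \<and> \<delta> (leaf_of v) = v"
  using bij_leaves unfolding leaf_of_def by (metis bij_betw_def f_inv_into_f inv_into_into)

lemma leaf_of_delta: "l \<in> leaves N A \<Longrightarrow> leaf_of (\<delta> l) = l"
  using bij_leaves unfolding leaf_of_def bij_betw_def by (simp add: inv_into_f_f)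

lemma delta_in_vertices: "l \<in> leaves N A \<Longrightarrow> \<delta> l \<in> V"
  using bij_leaves bij_betwE by blast

lemma leaf_vertices_subset: "leaf_vertices s t \<subseteq> V"
  unfolding leaf_vertices_def using delta_in_vertices by blast

lemma in_leaf_vertices_iff:
  assumes "v \<in> V"
  shows "v \<in> leaf_vertices s t \<longleftrightarrow> leaf_of v \<in> edge_side A s t"
proof
  assume "v \<in> leaf_vertices s t"
  then obtain l where "l \<in> leaves N A" "l \<in> edge_side A s t" "v = \<delta> l"
    unfolding leaf_vertices_def by blast
  then show "leaf_of v \<in> edge_side A s t" using leaf_of_delta by simp
next
  assume "leaf_of v \<in> edge_side A s t"
  then have "\<delta> (leaf_of v) \<in> leaf_vertices s t"
    using leaf_of[OF assms] unfolding leaf_vertices_def by blast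
  then show "v \<in> leaf_vertices s t" using leaf_of[OF assms] by simp
qed

lemma adjacent_in_vertices: "E u v \<Longrightarrow> v \<in> V"
  using graph by (simp add: graph_def)

lemma side_boundary_subset: "side_boundary s t \<subseteq> V"
  unfolding side_boundary_def using adjacent_in_vertices by blast

lemma bag_subset: "bag t \<subseteq> V"
proof -
  have "(if t \<in> leaves N A then closed_nbhd E (\<delta> t) else {}) \<subseteq> V"
    using closed_nbhd_subset[OF graph delta_in_vertices] by simp
  moreover have "(\<Union>s \<in> {s. A t s}. side_boundary s t) \<subseteq> V"
    using side_boundary_subset by blast
  ultimately show ?thesis by (simp add: bag_def)
qed

lemma side_boundary_subset_bag: "A t s \<Longrightarrow> side_boundary s t \<subseteq> bag t"
  unfolding bag_def by blast

lemma closed_nbhd_subset_bag_leaf_of: "v \<in> V \<Longrightarrow> closed_nbhd E v \<subseteq> bag (leaf_of v)"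
  using leaf_of unfolding bag_def by auto

lemma in_nodes_if_in_bag: "v \<in> bag t \<Longrightarrow> t \<in> N"
proof (cases "t \<in> leaves N A")
  case False
  assume "v \<in> bag t"
  then obtain s where "A t s" using False unfolding bag_def by auto
  then show ?thesis using is_tree_nodes[OF tree] by blast
qed (simp add: leaves_def)

lemma side_boundary_dominated:
  assumes "A s t"
  shows "\<exists>U \<subseteq> V. card U \<le> rank_width_of V E N A \<delta> \<and> side_boundary s t \<subseteq> (\<Union>u\<in>U. closed_nbhd E u)"
proof -
  have "finite (leaf_vertices s t)" using leaf_vertices_subset finite_vertices finite_subset by blast
  from cutrank_dominating_set[OF this, where V = V and E = E]
  obtain U where U: "U \<subseteq> leaf_vertices s t" "card U \<le> cutrank V E (leaf_vertices s t)"
    and dominating: "\<forall>v \<in> V - leaf_vertices s t. (\<exists>y \<in> leaf_vertices s t. E y v) \<longrightarrow> (\<exists>u \<in> U. E u v)"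
    by blast
  have "card U \<le> rank_width_of V E N A \<delta>"
    using U(2) cutrank_le_rank_width_of[OF rank_decomposition assms, of E]
    unfolding leaf_vertices_def by linarith
  moreover have "side_boundary s t \<subseteq> (\<Union>u\<in>U. closed_nbhd E u)"
  proof
    fix v assume v: "v \<in> side_boundary s t"
    then have "v \<in> V - leaf_vertices s t" "\<exists>y \<in> leaf_vertices s t. E y v"
      using side_boundary_subset unfolding side_boundary_def by blast+
    then obtain u where "u \<in> U" "E u v" using dominating by blast
    then show "v \<in> (\<Union>u\<in>U. closed_nbhd E u)" unfolding closed_nbhd_def by blast
  qed
  moreover have "U \<subseteq> V" using U(1) leaf_vertices_subset by blast
  ultimately show ?thesis by blast
qed

lemma bag_step_towards_leaf:
  assumes "v \<in> bag t" and "t \<noteq> leaf_of v"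
  shows "\<exists>s. A t s \<and> leaf_of v \<in> edge_side A s t \<and> v \<in> side_boundary t s"
proof -
  have v: "v \<in> V" using assms(1) bag_subset by blast
  have "t \<in> N" using assms(1) by (rule in_nodes_if_in_bag)
  moreover have "leaf_of v \<in> N" using leaf_of[OF v] by (simp add: leaves_def)
  ultimately obtain s where ts: "A t s" and towards: "leaf_of v \<in> edge_side A s t"
    using exists_edge_side_containing[OF tree] assms(2) by metis
  have "leaf_of v \<notin> edge_side A t s"
    using towards edge_sides_disjoint[OF tree is_tree_sym[OF tree ts]] by blast
  then have outside: "v \<notin> leaf_vertices t s" using in_leaf_vertices_iff[OF v] by blast
  have "\<exists>w \<in> leaf_vertices t s. E w v"
  proof (cases "\<exists>s'. A t s' \<and> v \<in> side_boundary s' t")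
    case True
    then obtain s' w where ts': "A t s'" and "v \<notin> leaf_vertices s' t"
      and w: "w \<in> leaf_vertices s' t" "E w v"
      unfolding side_boundary_def by blast
    then have "s' \<noteq> s" using towards in_leaf_vertices_iff[OF v] by blast
    then have "leaf_vertices s' t \<subseteq> leaf_vertices t s"
      using edge_side_subset_edge_side[OF tree ts ts'] unfolding leaf_vertices_def by blast
    then show ?thesis using w by blast
  next
    case False
    then have leaf: "t \<in> leaves N A" and "v \<in> closed_nbhd E (\<delta> t)"
      using assms(1) unfolding bag_def by (auto split: if_splits)
    moreover have "v \<noteq> \<delta> t" using assms(2) leaf_of_delta[OF leaf] by auto
    ultimately have "E (\<delta> t) v" unfolding closed_nbhd_def by blast
    moreover have "\<delta> t \<in> leaf_vertices t s" using leaf unfolding leaf_vertices_def by simp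
    ultimately show ?thesis by blast
  qed
  then show ?thesis using ts towards outside unfolding side_boundary_def by blast
qed

lemma side_boundary_dominators:
  obtains D where "\<And>s. A t s \<Longrightarrow> D s \<subseteq> V \<and> card (D s) \<le> rank_width_of V E N A \<delta> \<and>
    side_boundary s t \<subseteq> (\<Union>u\<in>D s. closed_nbhd E u)"
  using side_boundary_dominated[OF is_tree_sym[OF tree]] by metis

lemma bag_subset_UN_closed_nbhd:
  assumes "\<And>s. A t s \<Longrightarrow> side_boundary s t \<subseteq> (\<Union>u\<in>D s. closed_nbhd E u)"
  shows "bag t \<subseteq> (\<Union>u \<in> (\<Union>s \<in> {s. A t s}. D s) \<union> (if t \<in> leaves N A then {\<delta> t} else {}).
    closed_nbhd E u)"
proof
  fix v assume "v \<in> bag t"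
  then consider "t \<in> leaves N A" "v \<in> closed_nbhd E (\<delta> t)" | s where "A t s" "v \<in> side_boundary s t"
    unfolding bag_def by (auto split: if_splits)
  then show "v \<in> (\<Union>u \<in> (\<Union>s \<in> {s. A t s}. D s) \<union> (if t \<in> leaves N A then {\<delta> t} else {}).
    closed_nbhd E u)"
  proof cases
    case 1
    then show ?thesis by auto
  next
    case (2 s)
    then show ?thesis using assms[OF 2(1)] by blast
  qed
qed

lemma bag_covered_by_closed_nbhds:
  assumes "t \<in> N" and "rank_width_of V E N A \<delta> \<le> k" and "0 < k"
  shows "\<exists>U \<subseteq> V. card U \<le> 3 * k \<and> bag t \<subseteq> (\<Union>u\<in>U. closed_nbhd E u)"
proof -
  obtain D where D: "\<And>s. A t s \<Longrightarrow> D s \<subseteq> V \<and> card (D s) \<le> rank_width_of V E N A \<delta> \<and>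
    side_boundary s t \<subseteq> (\<Union>u\<in>D s. closed_nbhd E u)"
    using side_boundary_dominators[of t] by blast
  define U where "U = (\<Union>s \<in> {s. A t s}. D s) \<union> (if t \<in> leaves N A then {\<delta> t} else {})"
  have neighbours: "{s. A t s} = {s \<in> N. A t s}" using is_tree_nodes[OF tree] by blast
  then have "finite {s. A t s}" using finite_nodes by simp
  then have "card (\<Union>s \<in> {s. A t s}. D s) \<le> (\<Sum>s \<in> {s. A t s}. card (D s))"
    by (rule card_UN_le)
  also have "\<dots> \<le> card {s. A t s} * k"
    using sum_bounded_above[of "{s. A t s}" "\<lambda>s. card (D s)" k] D assms(2) by fastforce
  finally have card_D: "card (\<Union>s \<in> {s. A t s}. D s) \<le> tdegree N A t * k"
    by (simp add: neighbours tdegree_def)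
  have "card U \<le> 3 * k"
  proof (cases "t \<in> leaves N A")
    case True
    then have "tdegree N A t \<le> 1" by (simp add: leaves_def)
    then have "tdegree N A t * k \<le> k" using mult_le_mono1[of _ 1 k] by simp
    moreover have "card U \<le> card (\<Union>s \<in> {s. A t s}. D s) + 1"
      unfolding U_def using True card_Un_le[of "\<Union>s \<in> {s. A t s}. D s" "{\<delta> t}"] by simp
    ultimately show ?thesis using card_D assms(3) by linarith
  next
    case False
    moreover have "tdegree N A t \<le> 1 \<or> tdegree N A t = 3"
      using rank_decomposition assms(1) unfolding rank_decomposition_def by blast
    ultimately have "tdegree N A t = 3" using assms(1) by (simp add: leaves_def)
    then show ?thesis using card_D False by (simp add: U_def)
  qed
  moreover have "U \<subseteq> V"
    using D delta_in_vertices unfolding U_def by auto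
  moreover have "bag t \<subseteq> (\<Union>u\<in>U. closed_nbhd E u)"
    unfolding U_def using D by (intro bag_subset_UN_closed_nbhd) blast
  ultimately show ?thesis by blast
qed

lemma alpha_bag_le:
  assumes "t \<in> N" and "rank_width_of V E N A \<delta> \<le> k" and "0 < k"
  shows "alpha E (bag t) \<le> 3 * k * local_alpha V E"
proof -
  obtain U where U: "U \<subseteq> V" "card U \<le> 3 * k" and cover: "bag t \<subseteq> (\<Union>u\<in>U. closed_nbhd E u)"
    using bag_covered_by_closed_nbhds[OF assms] by blast
  have "finite U" using U(1) finite_vertices finite_subset by blast
  have "(\<Union>u\<in>U. closed_nbhd E u) \<subseteq> V"
    using U(1) closed_nbhd_subset[OF graph] by blast
  then have "finite (\<Union>u\<in>U. closed_nbhd E u)"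
    using finite_vertices finite_subset by blast
  then have "alpha E (bag t) \<le> alpha E (\<Union>u\<in>U. closed_nbhd E u)"
    using cover by (rule alpha_mono)
  also have "\<dots> \<le> card U * local_alpha V E"
    using alpha_UN_closed_nbhd_le[OF graph \<open>finite U\<close> U(1)] .
  also have "\<dots> \<le> 3 * k * local_alpha V E"
    using U(2) by (rule mult_le_mono1)
  finally show ?thesis .
qed

lemma bag_adj_to_leaf_of_within_edge_side:
  assumes "A s t" and "leaf_of v \<in> edge_side A s t" and "v \<in> bag s"
  shows "(bag_adj v)\<^sup>*\<^sup>* s (leaf_of v)"
  using assms
proof (induction "card (edge_side A s t)" arbitrary: s t rule: less_induct)
  case less
  show ?case
  proof (cases "s = leaf_of v")
    case False
    then obtain s' where ss': "A s s'" and towards: "leaf_of v \<in> edge_side A s' s"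
      and boundary: "v \<in> side_boundary s s'"
      using bag_step_towards_leaf[OF less.prems(3)] by blast
    have "s' \<noteq> t"
      using towards less.prems(2) edge_sides_disjoint[OF tree less.prems(1)] by blast
    then have "edge_side A s' s \<subset> edge_side A s t"
      using edge_side_psubset_edge_side[OF tree less.prems(1) ss'] by blast
    moreover have "finite (edge_side A s t)"
      using edge_side_subset_nodes[OF tree less.prems(1)] finite_nodes finite_subset by blast
    ultimately have smaller: "card (edge_side A s' s) < card (edge_side A s t)"
      by (rule psubset_card_mono[rotated])
    have "v \<in> bag s'"
      using boundary side_boundary_subset_bag is_tree_sym[OF tree ss'] by blast
    then have "(bag_adj v)\<^sup>*\<^sup>* s' (leaf_of v)"
      using less.hyps[OF smaller is_tree_sym[OF tree ss'] towards] by blast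
    moreover have "bag_adj v s s'" using ss' less.prems(3) \<open>v \<in> bag s'\<close> by (simp add: bag_adj_def)
    ultimately show ?thesis by (rule converse_rtranclp_into_rtranclp[rotated])
  qed simp
qed

lemma bag_adj_to_leaf_of:
  assumes "v \<in> bag t"
  shows "(bag_adj v)\<^sup>*\<^sup>* t (leaf_of v)"
proof (cases "t = leaf_of v")
  case False
  then obtain s where ts: "A t s" and towards: "leaf_of v \<in> edge_side A s t"
    and boundary: "v \<in> side_boundary t s"
    using bag_step_towards_leaf[OF assms] by blast
  have "v \<in> bag s"
    using boundary side_boundary_subset_bag is_tree_sym[OF tree ts] by blast
  then have "(bag_adj v)\<^sup>*\<^sup>* s (leaf_of v)"
    using bag_adj_to_leaf_of_within_edge_side[OF is_tree_sym[OF tree ts] towards] by blast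
  moreover have "bag_adj v t s" using ts assms \<open>v \<in> bag s\<close> by (simp add: bag_adj_def)
  ultimately show ?thesis by (rule converse_rtranclp_into_rtranclp[rotated])
qed simp

lemma tree_decomposition_bag: "tree_decomposition V E N A bag"
  unfolding tree_decomposition_def
proof (intro conjI ballI allI impI)
  show "is_tree N A" by (rule tree)
  show "bag t \<subseteq> V" for t by (rule bag_subset)
next
  fix v assume "v \<in> V"
  then show "\<exists>t\<in>N. v \<in> bag t"
    using closed_nbhd_subset_bag_leaf_of leaf_of by (auto simp: closed_nbhd_def leaves_def)
next
  fix u v assume "E u v"
  then have "u \<in> V" using adjacent_in_vertices graph by (meson graph_def)
  then have "u \<in> bag (leaf_of u) \<and> v \<in> bag (leaf_of u)" and "leaf_of u \<in> N"
    using closed_nbhd_subset_bag_leaf_of leaf_of \<open>E u v\<close> by (auto simp: closed_nbhd_def leaves_def)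
  then show "\<exists>t\<in>N. u \<in> bag t \<and> v \<in> bag t" by blast
next
  fix v s t assume "v \<in> bag s" and "v \<in> bag t"
  have "symp (bag_adj v)"
    by (auto intro!: sympI simp: bag_adj_def dest: is_tree_sym[OF tree])
  then have "(bag_adj v)\<^sup>*\<^sup>* (leaf_of v) t"
    using bag_adj_to_leaf_of[OF \<open>v \<in> bag t\<close>] symp_rtranclp sympD by metis
  then have "(bag_adj v)\<^sup>*\<^sup>* s t"
    using bag_adj_to_leaf_of[OF \<open>v \<in> bag s\<close>] by (rule rtranclp_trans[rotated])
  then show "(\<lambda>x y. A x y \<and> v \<in> bag x \<and> v \<in> bag y)\<^sup>*\<^sup>* s t"
    unfolding bag_adj_def .
qed

end

theorem theorem8p2:
  fixes V :: "'a set" and E :: "'a \<Rightarrow> 'a \<Rightarrow> bool" and d k :: nat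
  assumes "d > 0" and "k > 0"
    and "graph V E"
    and "local_alpha V E \<le> d"
    and "rankwidth V E \<le> k"
  shows "alpha_tw V E \<le> 3 * d * k"
proof (cases "card V \<le> 1")
  case True
  \<comment> \<open>The empty graph has no rank-decomposition, so here rankwidth V E is a junk value.\<close>
  have "alpha_tw V E \<le> alpha E V" using assms(3) by (rule alpha_tw_le_alpha)
  also have "\<dots> \<le> card V" using assms(3) by (simp add: alpha_le_card graph_def)
  also have "\<dots> \<le> 3 * d * k"
  proof -
    have "0 < 3 * d * k" using assms(1,2) by simp
    then show ?thesis using True by linarith
  qed
  finally show ?thesis .
next
  case False
  have "finite V" using assms(3) by (simp add: graph_def)
  moreover have "2 \<le> card V" using False by simp
  ultimately obtain N A \<delta> where rd: "rank_decomposition V N A \<delta>"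
    and width: "rank_width_of V E N A \<delta> = rankwidth V E"
    using optimal_rank_decomposition_exists by blast
  interpret graph_rank_decomposition V E N A \<delta>
    using assms(3) rd by unfold_locales
  have "rank_width_of V E N A \<delta> \<le> k" using width assms(5) by simp
  have "alpha_tw V E \<le> alpha_width E N bag"
    using tree_decomposition_bag by (rule alpha_tw_le_alpha_width)
  also have "\<dots> \<le> 3 * k * local_alpha V E"
  proof (rule alpha_width_le)
    show "finite N" by (rule finite_nodes)
    show "N \<noteq> {}" using tree by (simp add: is_tree_def)
    show "alpha E (bag t) \<le> 3 * k * local_alpha V E" if "t \<in> N" for t
      using alpha_bag_le[OF that \<open>rank_width_of V E N A \<delta> \<le> k\<close> assms(2)] .
  qed
  also have "\<dots> \<le> 3 * d * k" using assms(4) by simp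
  finally show ?thesis .
qed

end
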